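(* Let $\{s_j\}_{j=1}^\infty$ be a countable compact subset of $[0,1]$ containing $0$. Let $U(x,y)=\left(\frac{x}{2},\frac{y+1}{2}\right)$ and $D_j(x,y)=\left(\frac{x+s_j}{2},\frac{y}{2}\right)$ for $j\ge1$, and let $K'\subset\mathbb{R}^2$ be the unique non-empty compact set with $K'=U(K')\cup\bigcup_{j\ge1}D_j(K')$. Then $K'$ has empty interior. *)

theory Defs
  imports "HOL-Analysis.Analysis"
begin

definition U_map :: "real \<times> real \<Rightarrow> real \<times> real" where
  "U_map p = (fst p / 2, (snd p + 1) / 2)"

definition D_map :: "real \<Rightarrow> real \<times> real \<Rightarrow> real \<times> real" where
  "D_map t p = ((fst p + t) / 2, snd p / 2)"

end

theory Submission
  imports Defs
begin

text \<open>Iterating the self-similarity n times writes every point of K as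
  (c + x / 2^n, (k + y) / 2^n) with (x, y) \<in> K, k an integer and c in a countable compact set of
  n-digit sums. Near the top edge of the unit square only U can act, and U halves the abscissa, so
  points of K just below height 1 have abscissa close to 0. Applying this to the points of K just
  below the top of a dyadic row shows that, if K contained an open box, a whole open interval of
  abscissae would lie in the closure of the countable set of n-digit sums, which is impossible.\<close>

text \<open>The horizontal translation parts of the n-fold compositions of the maps
  D_map t, t \<in> S (U_map contributes the digit 0).\<close>

primrec digit_sums :: "real set \<Rightarrow> nat \<Rightarrow> real set" where
  "digit_sums S 0 = {0}"
| "digit_sums S (Suc n) = (\<lambda>(c, t). (c + t) / 2) ` (digit_sums S n \<times> S)"

lemma compact_digit_sums: "compact S \<Longrightarrow> compact (digit_sums S n)"
proof (induction n)
  case (Suc n)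
  have "continuous_on (digit_sums S n \<times> S) (\<lambda>(c, t). (c + t) / 2)"
    unfolding case_prod_beta by (intro continuous_intros) simp
  then show ?case
    using Suc by (auto intro: compact_continuous_image compact_Times)
qed simp

lemma countable_digit_sums: "countable S \<Longrightarrow> countable (digit_sums S n)"
  by (induction n) auto

lemma subset_unit_interval_if_self_averaging:
  fixes A :: "real set"
  assumes "compact A" "A \<noteq> {}"
    and avg: "\<And>a. a \<in> A \<Longrightarrow> \<exists>b\<in>A. \<exists>t\<in>{0..1}. a = (b + t) / 2"
  shows "A \<subseteq> {0..1}"
proof -
  obtain hi where hi: "hi \<in> A" "\<And>a. a \<in> A \<Longrightarrow> a \<le> hi"
    using compact_attains_sup[OF assms(1,2)] by blast
  obtain lo where lo: "lo \<in> A" "\<And>a. a \<in> A \<Longrightarrow> lo \<le> a"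
    using compact_attains_inf[OF assms(1,2)] by blast
  have "hi \<le> 1"
    using avg[OF hi(1)] hi(2) by fastforce
  moreover have "0 \<le> lo"
    using avg[OF lo(1)] lo(2) by fastforce
  ultimately show ?thesis
    using hi(2) lo(2) by force
qed

lemma dist_dyadic_cell_point:
  fixes y \<delta> :: real
  assumes "0 < \<delta>" "\<delta> \<le> 1"
  shows "dist ((\<lfloor>y * 2^N\<rfloor> + 1 - \<delta>) / 2^N) y < 1 / 2^N"
proof -
  have "\<bar>(\<lfloor>y * 2^N\<rfloor> + 1 - \<delta>) - y * 2^N\<bar> < 1"
    using assms by linarith
  then show ?thesis
    by (simp add: dist_real_def field_simps)
qed

locale UD_attractor =
  fixes s :: "nat \<Rightarrow> real" and K :: "(real \<times> real) set"
  assumes digits_unit: "s ` {1..} \<subseteq> {0..1}"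
    and compact_K: "compact K" and K_nonempty: "K \<noteq> {}"
    and K_eq: "K = U_map ` K \<union> (\<Union>j\<in>{1..}. D_map (s j) ` K)"
begin

lemma mem_K_cases:
  assumes "p \<in> K"
  obtains (U) q where "q \<in> K" "p = U_map q"
    | (D) j q where "j \<ge> 1" "q \<in> K" "p = D_map (s j) q"
  using assms K_eq by blast

lemma K_subset_unit_square: "K \<subseteq> {0..1} \<times> {0..1}"
proof -
  have "fst ` K \<subseteq> {0..1}"
  proof (rule subset_unit_interval_if_self_averaging)
    show "compact (fst ` K)"
      using compact_K by (intro compact_continuous_image continuous_intros)
    fix a assume "a \<in> fst ` K"
    then obtain p where p: "p \<in> K" "a = fst p" by blast
    from p(1) show "\<exists>b\<in>fst ` K. \<exists>t\<in>{0..1}. a = (b + t) / 2"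
    proof (cases rule: mem_K_cases)
      case (U q) then show ?thesis using p(2) by (force simp: U_map_def)
    next
      case (D j q) then show ?thesis using p(2) digits_unit by (force simp: D_map_def)
    qed
  qed (use K_nonempty in simp)
  moreover have "snd ` K \<subseteq> {0..1}"
  proof (rule subset_unit_interval_if_self_averaging)
    show "compact (snd ` K)"
      using compact_K by (intro compact_continuous_image continuous_intros)
    fix a assume "a \<in> snd ` K"
    then obtain p where p: "p \<in> K" "a = snd p" by blast
    from p(1) show "\<exists>b\<in>snd ` K. \<exists>t\<in>{0..1}. a = (b + t) / 2"
    proof (cases rule: mem_K_cases)
      case (U q) then show ?thesis using p(2) by (force simp: U_map_def)
    next
      case (D j q) then show ?thesis using p(2) by (force simp: D_map_def)
    qed
  qed (use K_nonempty in simp)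
  ultimately show ?thesis
    by (auto simp: subset_eq mem_Times_iff)
qed

lemma fst_le_if_snd_near_top:
  assumes "q \<in> K" "1 - 1 / 2^L < snd q"
  shows "fst q \<le> 1 / 2^L"
  using assms
proof (induction L arbitrary: q)
  case 0
  then show ?case using K_subset_unit_square by auto
next
  case (Suc L)
  from Suc.prems(1) show ?case
  proof (cases rule: mem_K_cases)
    case (U r)
    then have "1 - 1 / 2^L < snd r"
      using Suc.prems(2) by (simp add: U_map_def field_simps)
    then show ?thesis
      using Suc.IH U by (fastforce simp: U_map_def)
  next
    case (D j r)
    have "snd q \<le> 1 / 2"
      using D K_subset_unit_square by (auto simp: D_map_def)
    moreover have "(1::real) / 2^Suc L \<le> 1 / 2"
      by (simp add: field_simps)
    ultimately show ?thesis
      using Suc.prems(2) by linarith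
  qed
qed

lemma K_level_decomposition:
  assumes "0 \<in> s ` {1..}" "p \<in> K"
  shows "\<exists>q\<in>K. \<exists>c\<in>digit_sums (s ` {1..}) n. \<exists>k::int.
           p = (c + fst q / 2^n, (k + snd q) / 2^n)"
  using assms(2)
proof (induction n arbitrary: p)
  case 0
  then show ?case
    by (intro bexI[of _ p] bexI[of _ 0] exI[of _ 0]) auto
next
  case (Suc n)
  from Suc.prems show ?case
  proof (cases rule: mem_K_cases)
    case (U r)
    obtain q :: "real \<times> real" and c :: real and k :: int
      where q: "q \<in> K" "c \<in> digit_sums (s ` {1..}) n"
      and r: "r = (c + fst q / 2^n, (k + snd q) / 2^n)"
      using Suc.IH[OF U(1)] by blast
    have "c / 2 \<in> digit_sums (s ` {1..}) (Suc n)"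
      using q(2) assms(1) by (force simp: image_iff)
    moreover have "p = (c / 2 + fst q / 2^Suc n, (of_int (k + 2^n) + snd q) / 2^Suc n)"
      using U(2) r by (simp add: U_map_def field_simps)
    ultimately show ?thesis
      using q(1) by blast
  next
    case (D j r)
    obtain q :: "real \<times> real" and c :: real and k :: int
      where q: "q \<in> K" "c \<in> digit_sums (s ` {1..}) n"
      and r: "r = (c + fst q / 2^n, (k + snd q) / 2^n)"
      using Suc.IH[OF D(2)] by blast
    have "(c + s j) / 2 \<in> digit_sums (s ` {1..}) (Suc n)"
      using q(2) D(1) by force
    moreover have "p = ((c + s j) / 2 + fst q / 2^Suc n, (k + snd q) / 2^Suc n)"
      using D(3) r by (simp add: D_map_def field_simps)
    ultimately show ?thesis
      using q(1) by blast
  qed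
qed

lemma near_digit_sums_if_near_cell_top:
  fixes m :: int and \<delta> :: real
  assumes "0 \<in> s ` {1..}" "(x, (m + 1 - \<delta>) / 2^N) \<in> K" "0 < \<delta>" "\<delta> < 1 / 2^L"
  shows "\<exists>c\<in>digit_sums (s ` {1..}) N. dist c x \<le> 1 / 2^L"
proof -
  obtain q :: "real \<times> real" and c :: real and k :: int
    where q: "q \<in> K" and c: "c \<in> digit_sums (s ` {1..}) N"
    and xy: "(x, (m + 1 - \<delta>) / 2^N) = (c + fst q / 2^N, (k + snd q) / 2^N)"
    using K_level_decomposition[OF assms(1,2)] by blast
  have x: "x = c + fst q / 2^N" and y: "m + 1 - \<delta> = k + snd q"
    using xy by simp_all
  have q_unit: "0 \<le> fst q" "0 \<le> snd q" "snd q \<le> 1"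
    using q K_subset_unit_square by auto
  have "\<delta> < 1"
    using assms(4) order_less_le_trans[of \<delta> "1 / 2^L" 1] by simp
  then have "k = m" \<comment> \<open>m + 1 - \<delta> lies in (m, m + 1), and k + snd q in [k, k + 1]\<close>
    using y q_unit assms(3) by linarith
  then have "1 - 1 / 2^L < snd q"
    using y assms(4) by simp
  then have "fst q \<le> 1 / 2^L"
    using fst_le_if_snd_near_top q by blast
  moreover have "dist c x = fst q / 2^N"
    using x q_unit by (simp add: dist_real_def)
  moreover have "fst q / 2^N \<le> fst q / 1"
    using q_unit by (intro divide_left_mono) auto
  ultimately have "dist c x \<le> 1 / 2^L"
    by simp
  then show ?thesis
    using c by blast
qed

lemma mem_digit_sums_if_cell_tops_in_K:
  fixes m :: int
  assumes "compact (s ` {1..})" "0 \<in> s ` {1..}"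
    and tops: "\<And>L. (x, (m + 1 - 1 / 2^Suc L) / 2^N) \<in> K"
  shows "x \<in> digit_sums (s ` {1..}) N"
proof -
  have "closed (digit_sums (s ` {1..}) N)"
    using assms(1) by (intro compact_imp_closed compact_digit_sums)
  moreover have "\<exists>c\<in>digit_sums (s ` {1..}) N. dist c x < e" if "e > 0" for e
  proof -
    obtain L where L: "(1 / 2) ^ L < e"
      using real_arch_pow_inv[OF \<open>e > 0\<close>, of "1 / 2"] by auto
    have "(1::real) / 2^Suc L < 1 / 2^L"
      by (simp add: field_simps)
    then obtain c where c: "c \<in> digit_sums (s ` {1..}) N" "dist c x \<le> 1 / 2^L"
      using near_digit_sums_if_near_cell_top[OF assms(2) tops[of L]] by auto
    show ?thesis
      using c L by (auto simp: power_one_over intro!: bexI[of _ c])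
  qed
  ultimately show ?thesis
    using closed_approachable by blast
qed

theorem interior_K_empty:
  assumes "compact (s ` {1..})" "0 \<in> s ` {1..}"
  shows "interior K = {}"
proof (rule ccontr)
  assume "interior K \<noteq> {}"
  then obtain x0 y0 where "(x0, y0) \<in> interior K"
    by auto
  then obtain A B where "open A" "open B" "(x0, y0) \<in> A \<times> B" "A \<times> B \<subseteq> interior K"
    by (rule open_prod_elim[OF open_interior])
  then have A: "open A" "x0 \<in> A" and B: "open B" "y0 \<in> B" and "A \<times> B \<subseteq> K"
    using interior_subset by auto
  obtain r where "r > 0" "ball y0 r \<subseteq> B"
    using B open_contains_ball by blast
  obtain N where N: "(1 / 2) ^ N < r"
    using real_arch_pow_inv[OF \<open>r > 0\<close>, of "1 / 2"] by auto
  have A_sub: "A \<subseteq> digit_sums (s ` {1..}) N"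
  proof
    fix x assume "x \<in> A"
    have "(x, (\<lfloor>y0 * 2^N\<rfloor> + 1 - 1 / 2^Suc L) / 2^N) \<in> K" for L
    proof -
      have "(1::real) \<le> 2^Suc L"
        by (rule one_le_power) simp
      then have "dist ((\<lfloor>y0 * 2^N\<rfloor> + 1 - 1 / 2^Suc L) / 2^N) y0 < 1 / 2^N"
        by (intro dist_dyadic_cell_point) simp_all
      then have "(\<lfloor>y0 * 2^N\<rfloor> + 1 - 1 / 2^Suc L) / 2^N \<in> ball y0 r"
        using N by (simp add: dist_commute power_one_over)
      then show ?thesis
        using \<open>x \<in> A\<close> \<open>A \<times> B \<subseteq> K\<close> \<open>ball y0 r \<subseteq> B\<close> by blast
    qed
    then show "x \<in> digit_sums (s ` {1..}) N"
      by (rule mem_digit_sums_if_cell_tops_in_K[OF assms])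
  qed
  have "countable (digit_sums (s ` {1..}) N)"
    by (intro countable_digit_sums countable_image) auto
  then obtain x where "x \<in> A" "x \<notin> digit_sums (s ` {1..}) N"
    using open_minus_countable A by blast
  then show False
    using A_sub by blast
qed

end

theorem mainTheorem7:
  fixes s :: "nat \<Rightarrow> real" and K :: "(real \<times> real) set"
  assumes "compact (s ` {1..})"
    and "s ` {1..} \<subseteq> {0..1}"
    and "0 \<in> s ` {1..}"
    and "compact K" and "K \<noteq> {}"
    and "K = U_map ` K \<union> (\<Union>j\<in>{1..}. D_map (s j) ` K)"
  shows "interior K = {}"
proof -
  interpret UD_attractor s K
    using assms(2,4-6) by unfold_locales
  show ?thesis
    using interior_K_empty assms(1,3) .
qed

end
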